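(* Let $\mathcal H=(V,E)$ be a hypergraph with splitting functions, let $R\subseteq V$, $\varepsilon>0$ and $\alpha>0$. Then the set $S_L$ returned by Algorithm 2 satisfies $$S_L\in\arg\min_{S\subseteq V}\mathrm{Hstcut}_\alpha(S).$$
   Context: A hypergraph $\mathcal H=(V,E)$ has a finite node set $V$, and each hyperedge $e\in E$ is a subset of $V$. Each hyperedge $e$ carries a splitting function $w_e:2^e\to\mathbb R_{\ge0}$ satisfying $w_e(A)=w_e(e\setminus A)$ for all $A\subseteq e$ and $w_e(\emptyset)=w_e(e)=0$. For $S\subseteq V$, $\mathrm{cut}_{\mathcal H}(S)=\sum_{e\in E}w_e(e\cap S)$. The degree of $v$ is $d_v=\sum_{e\ni v}w_e(\{v\})$, and $\mathrm{vol}(S)=\sum_{v\in S}d_v$. Write $\bar S=V\setminus S$. For $\alpha>0$, $\mathrm{Hstcut}_\alpha(S)=\mathrm{cut}_{\mathcal H}(S)+\alpha\,\mathrm{vol}(\bar S\cap R)+\alpha\varepsilon\,\mathrm{vol}(S\cap\bar R)$. This is the $s$-$t$ cut value of $S\cup\{s\}$ in the hypergraph $\mathcal H_\alpha$ obtained from $\mathcal H$ by adding terminal edges $(s,r)$ of weight $\alpha d_r$ for $r\in R$ and $(j,t)$ of weight $\alpha\varepsilon d_j$ for $j\in\bar R$. Neighborhood notation: $E(v)=\{e\in E: v\in e\}$ and $E(S)=\bigcup_{v\in S}E(v)$. Also $\mathcal N(v)=\{u: \exists e\in E,\ u,v\in e\}$ and $\mathcal N(S)=\bigcup_{v\in S}\mathcal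 N(v)$. A local hypergraph is given by a node set $V_L\subseteq V$ and a hyperedge set $E_L\subseteq E$, with every $e\in E_L$ contained in $V_L$. Every node of $V_L$ keeps its terminal edge. For $S\subseteq V_L$, its cut value is $$\mathrm{Lstcut}_\alpha(S)=\sum_{e\in E_L}w_e(e\cap S)+\alpha\sum_{v\in V_L\cap R,\,v\notin S}d_v+\alpha\varepsilon\sum_{v\in V_L\cap\bar R,\,v\in S}d_v.$$ Algorithm 2 works as follows. Initialize $V_L=R\cup\mathcal N(R)$, $E_L=E(R)$, and $X=\emptyset$. Then repeat: 1. Compute $S_L\in\arg\min_{S\subseteq V_L}\mathrm{Lstcut}_\alpha(S)$. 2. Set $N=(S_L\cap\bar R)\setminus X$. 3. Update $V_L\leftarrow V_L\cup\mathcal N(N)$, $E_L\leftarrow E_L\cup E(N)$, and $X\leftarrow X\cup N$. Stop when $N=\emptyset$ and return $S_L$. *)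

theory Defs
  imports Main "HOL-Library.Extended_Real"
begin

definition splitting_hypergraph ::
  "'a set \<Rightarrow> 'a set set \<Rightarrow> ('a set \<Rightarrow> 'a set \<Rightarrow> real) \<Rightarrow> bool" where
  "splitting_hypergraph V E w \<longleftrightarrow>
     finite V \<and> (\<forall>e\<in>E. e \<subseteq> V) \<and>
     (\<forall>e\<in>E. \<forall>A. A \<subseteq> e \<longrightarrow> w e A \<ge> 0) \<and>
     (\<forall>e\<in>E. \<forall>A. A \<subseteq> e \<longrightarrow> w e A = w e (e - A)) \<and>
     (\<forall>e\<in>E. w e {} = 0 \<and> w e e = 0)"

definition hcut :: "'a set set \<Rightarrow> ('a set \<Rightarrow> 'a set \<Rightarrow> real) \<Rightarrow> 'a set \<Rightarrow> real" where
  "hcut E w S = (\<Sum>e\<in>E. w e (e \<inter> S))"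

definition deg :: "'a set set \<Rightarrow> ('a set \<Rightarrow> 'a set \<Rightarrow> real) \<Rightarrow> 'a \<Rightarrow> real" where
  "deg E w v = (\<Sum>e\<in>{e\<in>E. v \<in> e}. w e {v})"

definition vol :: "'a set set \<Rightarrow> ('a set \<Rightarrow> 'a set \<Rightarrow> real) \<Rightarrow> 'a set \<Rightarrow> real" where
  "vol E w S = (\<Sum>v\<in>S. deg E w v)"

definition Hstcut ::
  "'a set \<Rightarrow> 'a set set \<Rightarrow> ('a set \<Rightarrow> 'a set \<Rightarrow> real) \<Rightarrow> 'a set \<Rightarrow> real \<Rightarrow> real \<Rightarrow> 'a set \<Rightarrow> real" where
  "Hstcut V E w R eps alpha S =
     hcut E w S + alpha * vol E w ((V - S) \<inter> R) + alpha * eps * vol E w (S \<inter> (V - R))"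

text \<open>Local cut value on the local hypergraph (VL, EL); degrees are those of the full hypergraph.\<close>
definition Lstcut ::
  "'a set set \<Rightarrow> ('a set \<Rightarrow> 'a set \<Rightarrow> real) \<Rightarrow> 'a set \<Rightarrow> real \<Rightarrow> real \<Rightarrow>
   'a set \<Rightarrow> 'a set set \<Rightarrow> 'a set \<Rightarrow> real" where
  "Lstcut E w R eps alpha VL EL S =
     (\<Sum>e\<in>EL. w e (e \<inter> S))
     + alpha * (\<Sum>v\<in>{v\<in>VL \<inter> R. v \<notin> S}. deg E w v)
     + alpha * eps * (\<Sum>v\<in>{v\<in>VL - R. v \<in> S}. deg E w v)"

definition edges_at :: "'a set set \<Rightarrow> 'a set \<Rightarrow> 'a set set" where
  "edges_at E S = {e\<in>E. \<exists>v\<in>S. v \<in> e}"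

definition nbhd :: "'a set set \<Rightarrow> 'a set \<Rightarrow> 'a set" where
  "nbhd E S = {u. \<exists>v\<in>S. \<exists>e\<in>E. u \<in> e \<and> v \<in> e}"

definition is_argmin_on :: "('b \<Rightarrow> real) \<Rightarrow> 'b set \<Rightarrow> 'b \<Rightarrow> bool" where
  "is_argmin_on f A x \<longleftrightarrow> x \<in> A \<and> (\<forall>y\<in>A. f x \<le> f y)"

text \<open>States (VL, EL, X) reachable by Algorithm 2 (for any choice of minimisers).\<close>
inductive alg2_state ::
  "'a set \<Rightarrow> 'a set set \<Rightarrow> ('a set \<Rightarrow> 'a set \<Rightarrow> real) \<Rightarrow> 'a set \<Rightarrow> real \<Rightarrow> real \<Rightarrow>
   'a set \<Rightarrow> 'a set set \<Rightarrow> 'a set \<Rightarrow> bool"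
  for V E w R eps alpha where
  init: "alg2_state V E w R eps alpha (R \<union> nbhd E R) (edges_at E R) {}"
| step: "alg2_state V E w R eps alpha VL EL X \<Longrightarrow>
         is_argmin_on (Lstcut E w R eps alpha VL EL) (Pow VL) SL \<Longrightarrow>
         N = (SL - R) - X \<Longrightarrow> N \<noteq> {} \<Longrightarrow>
         alg2_state V E w R eps alpha (VL \<union> nbhd E N) (EL \<union> edges_at E N) (X \<union> N)"

text \<open>SL is a possible output of Algorithm 2: in a reachable state, SL is a local minimiser
  and the resulting N is empty, so the algorithm stops and returns SL.\<close>
definition alg2_output ::
  "'a set \<Rightarrow> 'a set set \<Rightarrow> ('a set \<Rightarrow> 'a set \<Rightarrow> real) \<Rightarrow> 'a set \<Rightarrow> real \<Rightarrow> real \<Rightarrow> 'a set \<Rightarrow> bool" where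
  "alg2_output V E w R eps alpha SL \<longleftrightarrow>
     (\<exists>VL EL X. alg2_state V E w R eps alpha VL EL X \<and>
        is_argmin_on (Lstcut E w R eps alpha VL EL) (Pow VL) SL \<and>
        (SL - R) - X = {})"

end

theory Submission
  imports Defs
begin

text \<open>Every reachable state of Algorithm 2 is a local hypergraph containing R that already
  holds all hyperedges incident to R and to the explored set X. The output S_L lies inside
  R \<union> X, so every hyperedge it cuts is local and its local and global cut values agree. For any
  S \<subseteq> V, the local cut of S \<inter> V_L drops the nonlocal hyperedges and the terminal edges outside
  V_L, all of nonnegative weight, so it is at most the global cut of S; it also lies inside V_L
  and therefore bounds the local minimum from above.\<close>

lemma splitting_hypergraphD:
  assumes "splitting_hypergraph V E w"
  shows splitting_hypergraph_finite: "finite V"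
    and splitting_hypergraph_edge_subset: "e \<in> E \<Longrightarrow> e \<subseteq> V"
    and splitting_hypergraph_weight_nonneg: "e \<in> E \<Longrightarrow> A \<subseteq> e \<Longrightarrow> 0 \<le> w e A"
    and splitting_hypergraph_weight_empty: "e \<in> E \<Longrightarrow> w e {} = 0"
proof -
  \<comment> \<open>The symmetry axiom is left out: as a rewrite rule it makes simp and blast loop.\<close>
  obtain "finite V" "\<forall>e\<in>E. e \<subseteq> V" "\<forall>e\<in>E. \<forall>A. A \<subseteq> e \<longrightarrow> 0 \<le> w e A"
    "\<forall>e\<in>E. w e {} = 0 \<and> w e e = 0"
    using assms unfolding splitting_hypergraph_def by (elim conjE) (rule that; assumption)
  then show "finite V" "e \<in> E \<Longrightarrow> e \<subseteq> V" "e \<in> E \<Longrightarrow> A \<subseteq> e \<Longrightarrow> 0 \<le> w e A"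
    "e \<in> E \<Longrightarrow> w e {} = 0"
    by simp_all
qed

lemma splitting_hypergraph_finite_edges:
  assumes "splitting_hypergraph V E w"
  shows "finite E"
  using splitting_hypergraph_finite[OF assms] splitting_hypergraph_edge_subset[OF assms]
  by (meson Pow_iff finite_Pow_iff finite_subset subsetI)

lemma deg_nonneg:
  assumes "splitting_hypergraph V E w"
  shows "0 \<le> deg E w v"
  unfolding deg_def by (intro sum_nonneg) (simp add: splitting_hypergraph_weight_nonneg[OF assms])

lemma edges_at_subset: "edges_at E S \<subseteq> E"
  unfolding edges_at_def by blast

lemma edges_at_Un: "edges_at E (A \<union> B) = edges_at E A \<union> edges_at E B"
  unfolding edges_at_def by blast

lemma edges_at_mono: "A \<subseteq> B \<Longrightarrow> edges_at E A \<subseteq> edges_at E B"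
  unfolding edges_at_def by blast

lemma edges_at_subset_nbhd: "e \<in> edges_at E S \<Longrightarrow> e \<subseteq> nbhd E S"
  unfolding nbhd_def edges_at_def by blast

lemma nbhd_subset: "\<forall>e\<in>E. e \<subseteq> V \<Longrightarrow> nbhd E S \<subseteq> V"
  unfolding nbhd_def by blast

lemma alg2_state_local_hypergraph:
  assumes "alg2_state V E w R eps alpha VL EL X"
    and edges_in_V: "\<forall>e\<in>E. e \<subseteq> V" and "R \<subseteq> V"
  shows "R \<subseteq> VL \<and> VL \<subseteq> V \<and> EL \<subseteq> E \<and> (\<forall>e\<in>EL. e \<subseteq> VL) \<and> edges_at E (R \<union> X) \<subseteq> EL"
  using assms(1)
proof induction
  case init
  have "R \<union> nbhd E R \<subseteq> V" using \<open>R \<subseteq> V\<close> nbhd_subset[OF edges_in_V] by (rule Un_least)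
  moreover have "\<forall>e\<in>edges_at E R. e \<subseteq> R \<union> nbhd E R" using edges_at_subset_nbhd by blast
  ultimately show ?case using edges_at_subset by simp
next
  case (step VL EL X SL N)
  have IH: "R \<subseteq> VL" "VL \<subseteq> V" "EL \<subseteq> E" "\<forall>e\<in>EL. e \<subseteq> VL" "edges_at E (R \<union> X) \<subseteq> EL"
    using step.IH by simp_all
  have "VL \<union> nbhd E N \<subseteq> V" using IH(2) nbhd_subset[OF edges_in_V] by (rule Un_least)
  moreover have "\<forall>e\<in>EL \<union> edges_at E N. e \<subseteq> VL \<union> nbhd E N"
    using IH(4) edges_at_subset_nbhd by blast
  moreover have "EL \<union> edges_at E N \<subseteq> E" using IH(3) edges_at_subset by (rule Un_least)
  moreover have "edges_at E (R \<union> (X \<union> N)) \<subseteq> EL \<union> edges_at E N"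
    using IH(5) unfolding edges_at_Un by blast
  ultimately show ?case using IH(1) by (intro conjI) auto
qed

lemma hcut_eq_sum_local_edges:
  assumes "splitting_hypergraph V E w" and "EL \<subseteq> E" and "edges_at E S \<subseteq> EL"
  shows "hcut E w S = (\<Sum>e\<in>EL. w e (e \<inter> S))"
  unfolding hcut_def
proof (rule sum.mono_neutral_right)
  show "finite E" using assms(1) by (rule splitting_hypergraph_finite_edges)
  show "\<forall>e\<in>E - EL. w e (e \<inter> S) = 0"
  proof
    fix e assume e: "e \<in> E - EL"
    then have "e \<inter> S = {}" using assms(3) unfolding edges_at_def by blast
    then show "w e (e \<inter> S) = 0" using splitting_hypergraph_weight_empty[OF assms(1)] e by simp
  qed
qed fact

lemma Hstcut_eq_Lstcut:
  assumes "splitting_hypergraph V E w"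
    and "R \<subseteq> VL" "VL \<subseteq> V" "EL \<subseteq> E" "S \<subseteq> VL" "edges_at E S \<subseteq> EL"
  shows "Hstcut V E w R eps alpha S = Lstcut E w R eps alpha VL EL S"
proof -
  have "(V - S) \<inter> R = {v\<in>VL \<inter> R. v \<notin> S}" "S \<inter> (V - R) = {v\<in>VL - R. v \<in> S}"
    using assms(2,3,5) by blast+
  then show ?thesis
    unfolding Hstcut_def Lstcut_def vol_def hcut_eq_sum_local_edges[OF assms(1,4,6)] by simp
qed

lemma Lstcut_restrict_le_Hstcut:
  assumes hyp: "splitting_hypergraph V E w" and "0 \<le> alpha * eps"
    and "R \<subseteq> VL" "VL \<subseteq> V" "EL \<subseteq> E" "\<forall>e\<in>EL. e \<subseteq> VL" "S \<subseteq> V"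
  shows "Lstcut E w R eps alpha VL EL (S \<inter> VL) \<le> Hstcut V E w R eps alpha S"
proof -
  have "(\<Sum>e\<in>EL. w e (e \<inter> (S \<inter> VL))) = (\<Sum>e\<in>EL. w e (e \<inter> S))"
  proof (rule sum.cong)
    show "w e (e \<inter> (S \<inter> VL)) = w e (e \<inter> S)" if "e \<in> EL" for e
    proof -
      have "e \<inter> (S \<inter> VL) = e \<inter> S" using assms(6) that by blast
      then show ?thesis by (rule arg_cong)
    qed
  qed (rule refl)
  also have "\<dots> \<le> hcut E w S"
    unfolding hcut_def
  proof (rule sum_mono2)
    show "finite E" using hyp by (rule splitting_hypergraph_finite_edges)
    show "\<And>e. e \<in> E - EL \<Longrightarrow> 0 \<le> w e (e \<inter> S)"
      using splitting_hypergraph_weight_nonneg[OF hyp] by blast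
  qed fact
  finally have cut: "(\<Sum>e\<in>EL. w e (e \<inter> (S \<inter> VL))) \<le> hcut E w S" .
  have R_part: "{v\<in>VL \<inter> R. v \<notin> S \<inter> VL} = (V - S) \<inter> R"
    using assms(3,4) by blast
  have "(\<Sum>v\<in>{v\<in>VL - R. v \<in> S \<inter> VL}. deg E w v) \<le> vol E w (S \<inter> (V - R))"
    unfolding vol_def
  proof (rule sum_mono2)
    show "finite (S \<inter> (V - R))"
      using splitting_hypergraph_finite[OF hyp] assms(7) by (blast intro: finite_subset)
    show "{v\<in>VL - R. v \<in> S \<inter> VL} \<subseteq> S \<inter> (V - R)" using assms(4) by blast
  qed (rule deg_nonneg[OF hyp])
  then have "alpha * eps * (\<Sum>v\<in>{v\<in>VL - R. v \<in> S \<inter> VL}. deg E w v)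
      \<le> alpha * eps * vol E w (S \<inter> (V - R))"
    using \<open>0 \<le> alpha * eps\<close> by (rule mult_left_mono)
  with cut show ?thesis
    unfolding Hstcut_def Lstcut_def vol_def R_part by linarith
qed

theorem theorem2:
  fixes V :: "'a set" and E :: "'a set set" and w :: "'a set \<Rightarrow> 'a set \<Rightarrow> real"
    and R :: "'a set" and eps alpha :: real and SL :: "'a set"
  assumes "splitting_hypergraph V E w"
    and "R \<subseteq> V" and "eps > 0" and "alpha > 0"
    and "alg2_output V E w R eps alpha SL"
  shows "is_argmin_on (Hstcut V E w R eps alpha) (Pow V) SL"
proof -
  obtain VL EL X where state: "alg2_state V E w R eps alpha VL EL X"
    and local_min: "is_argmin_on (Lstcut E w R eps alpha VL EL) (Pow VL) SL"
    and stopped: "(SL - R) - X = {}"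
    using assms(5) unfolding alg2_output_def by blast
  have local: "R \<subseteq> VL" "VL \<subseteq> V" "EL \<subseteq> E" "\<forall>e\<in>EL. e \<subseteq> VL" "edges_at E (R \<union> X) \<subseteq> EL"
    using alg2_state_local_hypergraph[OF state _ assms(2)]
      splitting_hypergraph_edge_subset[OF assms(1)] by simp_all
  have "SL \<subseteq> VL" using local_min unfolding is_argmin_on_def by blast
  have "edges_at E SL \<subseteq> EL"
    using edges_at_mono[of SL "R \<union> X" E] stopped local(5) by blast
  have "Hstcut V E w R eps alpha SL \<le> Hstcut V E w R eps alpha S" if "S \<subseteq> V" for S
  proof -
    have "Hstcut V E w R eps alpha SL = Lstcut E w R eps alpha VL EL SL"
      by (rule Hstcut_eq_Lstcut[OF assms(1) local(1-3) \<open>SL \<subseteq> VL\<close> \<open>edges_at E SL \<subseteq> EL\<close>])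
    also have "\<dots> \<le> Lstcut E w R eps alpha VL EL (S \<inter> VL)"
      using local_min unfolding is_argmin_on_def by blast
    also have "\<dots> \<le> Hstcut V E w R eps alpha S"
      using Lstcut_restrict_le_Hstcut[OF assms(1) _ local(1-4) that] assms(3,4) by simp
    finally show ?thesis .
  qed
  then show ?thesis
    unfolding is_argmin_on_def using \<open>SL \<subseteq> VL\<close> local(2) by blast
qed

end
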